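(* As $n\to\infty$, $$E(n)=2^{n+1}\left(\frac1n-\frac{3}{n^2}+O\!\left(\frac1{n^3}\right)\right),$$ where $E(n)=(-1)^n n!\{R_n(2)-R_n(1)R_{n-1}(1)\}$ with $R_n(x)=\sum_{k=0}^n (-x)^k/k!$.
   Context: $E(n)$ is the optimal value of the linear programming relaxation (variables $x_u\in[0,1]$, $u\in\mathbb{F}_2^n$) of the problem of minimizing $\sum_u x_u$ subject to $x_v+\sum_{u\supset v,\ \mathrm{dist}(u,v)=1}x_u\ge1$ for all $v\in\mathbb{F}_2^n$; it equals the stated closed form. *)

theory Defs
  imports Complex_Main "HOL-Library.Landau_Symbols"
begin

definition R :: "nat \<Rightarrow> real \<Rightarrow> real" where
  "R n x = (\<Sum>k = 0..n. (- x) ^ k / fact k)"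

text \<open>E(n) = (-1)^n n! (R_n(2) - R_n(1) R_{n-1}(1)).  (For n = 0, n - 1 truncates to 0;
  irrelevant for the asymptotic statement.)\<close>
definition E :: "nat \<Rightarrow> real" where
  "E n = (-1) ^ n * fact n * (R n 2 - R n 1 * R (n - 1) 1)"

end

(*
  With c(i, j) = (-1)^(i+j) / (i! j!), the coefficient of x^i y^j in e^(-x) e^(-y), the
  binomial theorem writes R_n(2) as the sum of c over the triangle i + j <= n, while
  R_n(1) R_(n-1)(1) is the sum over the rectangle i <= n, j < n.  Their difference is c(0, n)
  minus the part of the rectangle above the antidiagonal; grouping it by i + j = n + m gives

    E(n) = 1 - sum_(m=1)^(n-1) (-1)^m n!/(n+m)! T(n, m),   T(n, m) = sum_(m<i<=n) C(n+m, i).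

  T(n, m) = mid_binom_sum n m is 2^(n+m) minus a polynomial in n, so the terms m = 1, 2
  are explicit and produce the two leading terms.  Since n!/(n+m)! <= n^(-m), the terms
  m >= 3 are dominated by the geometric series 2^n sum (2/n)^m = O(2^n / n^3).
*)
theory Submission
  imports Defs "HOL-Real_Asymp.Real_Asymp"
begin

definition exp_neg_coeff :: "nat \<Rightarrow> nat \<Rightarrow> real" where
  "exp_neg_coeff i j = (-1) ^ (i + j) / (fact i * fact j)"

lemma R_two_eq_triangle_sum: "R n 2 = (\<Sum>(i, j) \<in> {(i, j). i + j \<le> n}. exp_neg_coeff i j)"
proof -
  have neg_two_power: "(-2) ^ k / fact k = (\<Sum>i\<le>k. exp_neg_coeff i (k - i))" for k
  proof -
    have "(-2 :: real) ^ k = (\<Sum>i\<le>k. of_nat (k choose i) * (-1) ^ i * (-1) ^ (k - i))"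
      using binomial_ring[of "-1 :: real" "-1" k] by simp
    then show ?thesis
      by (simp add: sum_divide_distrib exp_neg_coeff_def binomial_fact power_add[symmetric])
  qed
  show ?thesis
    unfolding R_def sum.triangle_reindex_eq by (simp add: neg_two_power atLeast0AtMost)
qed

lemma R_one_mult_eq_rectangle_sum: "R n 1 * R m 1 = (\<Sum>(i, j) \<in> {..n} \<times> {..m}. exp_neg_coeff i j)"
  unfolding R_def exp_neg_coeff_def
  by (simp add: sum_product sum.cartesian_product power_add atLeast0AtMost)

lemma sum_diff_sum_Diff:
  fixes f :: "'a \<Rightarrow> 'b :: ab_group_add"
  assumes "finite A" "finite B"
  shows "sum f A - sum f B = sum f (A - B) - sum f (B - A)"
  using sum.Int_Diff[OF assms(1), of f B] sum.Int_Diff[OF assms(2), of f A]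
  by (simp add: Int_commute)

lemma sum_above_antidiagonal:
  fixes g :: "nat \<Rightarrow> nat \<Rightarrow> 'a :: comm_monoid_add"
  shows "(\<Sum>(i, j) \<in> {(i, j). i \<le> n \<and> j < n \<and> n < i + j}. g i j)
     = (\<Sum>m\<in>{1..<n}. \<Sum>i\<in>{m<..n}. g i (n + m - i))"
proof -
  have "(\<Sum>m\<in>{1..<n}. \<Sum>i\<in>{m<..n}. g i (n + m - i))
      = (\<Sum>(m, i) \<in> Sigma {1..<n} (\<lambda>m. {m<..n}). g i (n + m - i))"
    by (rule sum.Sigma) auto
  also have "\<dots> = (\<Sum>(i, j) \<in> {(i, j). i \<le> n \<and> j < n \<and> n < i + j}. g i j)"
    by (rule sum.reindex_bij_witness[where i = "\<lambda>(i, j). (i + j - n, i)"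
          and j = "\<lambda>(m, i). (i, n + m - i)"]) auto
  finally show ?thesis ..
qed

lemma R_two_minus_R_one_mult:
  assumes "1 \<le> n"
  shows "R n 2 - R n 1 * R (n - 1) 1
           = exp_neg_coeff 0 n - (\<Sum>m\<in>{1..<n}. \<Sum>i\<in>{m<..n}. exp_neg_coeff i (n + m - i))"
proof -
  have "{(i, j). i + j \<le> n} - {..n} \<times> {..n - 1} = {(0, n)}"
    using assms by auto
  moreover have "{..n} \<times> {..n - 1} - {(i, j). i + j \<le> n} = {(i, j). i \<le> n \<and> j < n \<and> n < i + j}"
    using assms by auto
  moreover have "finite {(i, j). i + j \<le> (n :: nat)}"
    by (rule finite_subset[of _ "{..n} \<times> {..n}"]) auto
  ultimately show ?thesis
    unfolding R_two_eq_triangle_sum R_one_mult_eq_rectangle_sum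
    by (simp add: sum_diff_sum_Diff sum_above_antidiagonal)
qed

definition mid_binom_sum :: "nat \<Rightarrow> nat \<Rightarrow> real" where
  "mid_binom_sum n m = (\<Sum>i\<in>{m<..n}. real ((n + m) choose i))"

lemma E_eq_alternating_sum:
  assumes "1 \<le> n"
  shows "E n = 1 - (\<Sum>m\<in>{1..<n}. (-1) ^ m * (fact n / fact (n + m)) * mid_binom_sum n m)"
proof -
  have sign: "(-1 :: real) ^ n * (-1) ^ (n + k) = (-1) ^ k" for k
    by (simp add: power_add mult.assoc[symmetric] power_mult_distrib[symmetric])
  have first: "(-1) ^ n * fact n * exp_neg_coeff 0 n = 1"
    using sign[of 0] by (simp add: exp_neg_coeff_def)
  have diagonal_term: "(-1) ^ n * fact n * exp_neg_coeff i (n + m - i)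
      = (-1) ^ m * (fact n / fact (n + m)) * real ((n + m) choose i)"
    if "m < i" "i \<le> n" for i m
  proof -
    have "i + (n + m - i) = n + m" using that by simp
    then show ?thesis
      using that sign[of m] by (simp add: exp_neg_coeff_def binomial_fact field_simps)
  qed
  show ?thesis
    unfolding E_def R_two_minus_R_one_mult[OF assms] mid_binom_sum_def
    by (simp add: right_diff_distrib sum_distrib_left first diagonal_term)
qed

lemma mid_binom_sum_nonneg: "0 \<le> mid_binom_sum n m"
  unfolding mid_binom_sum_def by (simp add: sum_nonneg)

lemma sum_binomial_row: "(\<Sum>i\<le>k. real (k choose i)) = 2 ^ k"
  by (metis choose_row_sum of_nat_sum of_nat_power of_nat_numeral)

lemma mid_binom_sum_le: "mid_binom_sum n m \<le> 2 ^ (n + m)"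
proof -
  have "mid_binom_sum n m \<le> (\<Sum>i\<le>n + m. real ((n + m) choose i))"
    unfolding mid_binom_sum_def by (rule sum_mono2) auto
  then show ?thesis by (simp only: sum_binomial_row)
qed

lemma mid_binom_sum_eq:
  assumes "m \<le> n"
  shows "mid_binom_sum n m
           = 2 ^ (n + m) - (\<Sum>i\<le>m. real ((n + m) choose i)) - (\<Sum>i<m. real ((n + m) choose i))"
proof -
  let ?c = "\<lambda>i. real ((n + m) choose i)"
  have "{..n + m} = {..m} \<union> {m<..n} \<union> {n<..n + m}"
    using assms by auto
  then have "2 ^ (n + m) = sum ?c ({..m} \<union> {m<..n} \<union> {n<..n + m})"
    by (simp only: sum_binomial_row[symmetric])
  also have "\<dots> = sum ?c {..m} + mid_binom_sum n m + sum ?c {n<..n + m}"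
    unfolding mid_binom_sum_def using assms by (subst sum.union_disjoint; auto)+
  moreover have "sum ?c {n<..n + m} = sum ?c {..<m}"
    by (rule sum.reindex_bij_witness[where i = "\<lambda>i. n + m - i" and j = "\<lambda>i. n + m - i"])
       (auto simp: binomial_symmetric[symmetric])
  ultimately show ?thesis by simp
qed

lemma mid_binom_sum_one:
  assumes "1 \<le> n"
  shows "mid_binom_sum n 1 = 2 ^ (n + 1) - (real n + 3)"
  using assms by (simp add: mid_binom_sum_eq)

lemma mid_binom_sum_two:
  assumes "2 \<le> n"
  shows "mid_binom_sum n 2 = 2 ^ (n + 2) - (real n ^ 2 + 7 * real n + 14) / 2"
proof -
  have "((n + 2) choose 2) * 2 = (n + 2) * (n + 1)"
    using Suc_times_binomial_eq[of "n + 1" 1] by (simp add: numeral_2_eq_2)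
  then have "real ((n + 2) choose 2) = (real n + 2) * (real n + 1) / 2"
    by (simp add: field_simps flip: of_nat_mult)
  moreover have "{..2 :: nat} = {0, 1, 2}" "{..<2 :: nat} = {0, 1}"
    by auto
  ultimately show ?thesis
    using assms by (simp add: mid_binom_sum_eq field_simps power2_eq_square)
qed

lemma fact_mult_pow_le_fact_add: "fact n * real n ^ m \<le> fact (n + m)"
proof (induction m)
  case 0
  then show ?case by simp
next
  case (Suc m)
  have "fact n * real n ^ Suc m = real n * (fact n * real n ^ m)"
    by simp
  also have "\<dots> \<le> real (Suc (n + m)) * fact (n + m)"
    using Suc.IH by (intro mult_mono) auto
  finally show ?case by simp
qed

lemma geometric_sum_le_twice_first_term:
  fixes x :: real
  assumes "0 \<le> x" "x \<le> 1 / 2"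
  shows "(\<Sum>m\<in>{k..<N}. x ^ m) \<le> 2 * x ^ k"
proof (cases "k < N")
  case True
  then have "(1 - x) * (\<Sum>m\<in>{k..<N}. x ^ m) = x ^ k - x ^ N"
    using sum_gp_multiplied[of k "N - 1" x] by (simp add: atLeastLessThanSuc_atLeastAtMost[symmetric])
  also have "\<dots> \<le> x ^ k"
    using assms by simp
  also have "\<dots> \<le> (1 - x) * (2 * x ^ k)"
    using mult_right_mono[of 1 "2 * (1 - x)" "x ^ k"] assms by (simp add: algebra_simps)
  finally show ?thesis
    using assms by simp
qed (use assms in simp)

definition E_tail :: "nat \<Rightarrow> real" where
  "E_tail n = (\<Sum>m\<in>{3..<n}. (-1) ^ m * (fact n / fact (n + m)) * mid_binom_sum n m)"

lemma abs_E_tail_le: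
  assumes "4 \<le> n"
  shows "\<bar>E_tail n\<bar> \<le> 16 * 2 ^ n / real n ^ 3"
proof -
  have n_pos: "real n > 0"
    using assms by simp
  have term_le: "\<bar>(-1) ^ m * (fact n / fact (n + m)) * mid_binom_sum n m\<bar> \<le> 2 ^ n * (2 / real n) ^ m"
    for m
  proof -
    have "fact n / fact (n + m) \<le> 1 / real n ^ m"
      using fact_mult_pow_le_fact_add[of n m] n_pos by (simp add: field_simps)
    then have "fact n / fact (n + m) * mid_binom_sum n m \<le> 1 / real n ^ m * 2 ^ (n + m)"
      by (intro mult_mono mid_binom_sum_le mid_binom_sum_nonneg) auto
    then show ?thesis
      using mid_binom_sum_nonneg[of n m] by (simp add: abs_mult power_add power_divide)
  qed
  have "\<bar>E_tail n\<bar> \<le> (\<Sum>m\<in>{3..<n}. 2 ^ n * (2 / real n) ^ m)"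
    unfolding E_tail_def using term_le by (intro order.trans[OF sum_abs] sum_mono)
  also have "\<dots> \<le> 2 ^ n * (2 * (2 / real n) ^ 3)"
    unfolding sum_distrib_left[symmetric] using assms
    by (intro mult_left_mono geometric_sum_le_twice_first_term) (auto simp: field_simps)
  finally show ?thesis
    by (simp add: power_divide mult.commute)
qed

lemma E_eq_first_terms_minus_tail:
  assumes "3 \<le> n"
  shows "E n = 1 + mid_binom_sum n 1 / (real n + 1)
                 - mid_binom_sum n 2 / ((real n + 1) * (real n + 2)) - E_tail n"
proof -
  let ?a = "\<lambda>m. (-1) ^ m * (fact n / fact (n + m)) * mid_binom_sum n m"
  have "{1..<n} = {1, 2} \<union> {3..<n}"
    using assms by auto
  then have "E n = 1 - sum ?a ({1, 2} \<union> {3..<n})"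
    using E_eq_alternating_sum[of n] assms by simp
  also have "\<dots> = 1 + fact n / fact (n + 1) * mid_binom_sum n 1
      - fact n / fact (n + 2) * mid_binom_sum n 2 - E_tail n"
    unfolding E_tail_def by (subst sum.union_disjoint) auto
  also have "fact (n + 1) = (real n + 1) * fact n"
    by (simp add: algebra_simps)
  also have "fact (n + 2) = (real n + 1) * (real n + 2) * fact n"
    by (simp add: numeral_2_eq_2 algebra_simps)
  finally show ?thesis
    by simp
qed

theorem corollary1:
  shows "(\<lambda>n. E n - 2 ^ (n + 1) * (1 / real n - 3 / real n ^ 2))
           \<in> O[at_top](\<lambda>n. 2 ^ (n + 1) / real n ^ 3)"
proof -
  define head where "head n = 1 + (2 ^ (n + 1) - (real n + 3)) / (real n + 1)
    - (2 ^ (n + 2) - (real n ^ 2 + 7 * real n + 14) / 2) / ((real n + 1) * (real n + 2))" for n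
  have split: "\<forall>\<^sub>F n in at_top. E n - 2 ^ (n + 1) * (1 / real n - 3 / real n ^ 2)
      = (head n - 2 ^ (n + 1) * (1 / real n - 3 / real n ^ 2)) - E_tail n"
    using eventually_ge_at_top[of "3 :: nat"]
  proof eventually_elim
    case (elim n)
    then show ?case
      using mid_binom_sum_one[of n] mid_binom_sum_two[of n]
      by (simp add: E_eq_first_terms_minus_tail head_def)
  qed
  have head_bigo: "(\<lambda>n. head n - 2 ^ (n + 1) * (1 / real n - 3 / real n ^ 2))
      \<in> O(\<lambda>n. 2 ^ (n + 1) / real n ^ 3)"
    unfolding head_def by real_asymp
  have "E_tail \<in> O(\<lambda>n. 16 * 2 ^ n / real n ^ 3)"
    by (intro landau_o.big_mono eventually_mono[OF eventually_ge_at_top[of 4]])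
       (simp add: abs_E_tail_le)
  also have "(\<lambda>n. 16 * 2 ^ n / real n ^ 3) \<in> O(\<lambda>n. 2 ^ (n + 1) / real n ^ 3)"
    by real_asymp
  finally show ?thesis
    using landau_o.big.in_cong[OF split] head_bigo by (simp add: sum_in_bigo)
qed

end
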